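(* Let $G$ be a harmonic-even partial cube and let $F_{ab},F_{cd}$ be any two $\Theta$-classes of $G$. Then there exists a convex cycle in $G$ that contains an edge of $F_{ab}$ and an edge of $F_{cd}$.
   Context: A partial cube is a graph isometrically embeddable into a hypercube. On edges define $ab\,\Theta\,xy$ iff $d(a,x)+d(b,y)\neq d(a,y)+d(b,x)$ ($d$ the shortest-path distance); in a partial cube this is an equivalence relation, and $F_{uv}$ denotes the $\Theta$-class of edge $uv$; $i(G)$ is the number of $\Theta$-classes. A graph is harmonic-even if every vertex $v$ has a unique vertex $\bar v$ at distance $\mathrm{diam}(G)$ and $\bar u\bar v$ is an edge whenever $uv$ is an edge. A subgraph $H$ is convex if every shortest path of $G$ between vertices of $H$ lies in $H$; a convex cycle is a cycle that is a convex subgraph. *)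

theory Defs
  imports Main
begin

definition graph :: "'a set \<Rightarrow> ('a \<Rightarrow> 'a \<Rightarrow> bool) \<Rightarrow> bool" where
  "graph V E \<longleftrightarrow> (\<forall>u v. E u v \<longrightarrow> u \<in> V \<and> v \<in> V \<and> u \<noteq> v \<and> E v u)"

definition walk :: "'a set \<Rightarrow> ('a \<Rightarrow> 'a \<Rightarrow> bool) \<Rightarrow> 'a list \<Rightarrow> bool" where
  "walk V E p \<longleftrightarrow> p \<noteq> [] \<and> set p \<subseteq> V \<and> (\<forall>i. Suc i < length p \<longrightarrow> E (p ! i) (p ! Suc i))"

definition walk_betw :: "'a set \<Rightarrow> ('a \<Rightarrow> 'a \<Rightarrow> bool) \<Rightarrow> 'a \<Rightarrow> 'a list \<Rightarrow> 'a \<Rightarrow> bool" where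
  "walk_betw V E u p v \<longleftrightarrow> walk V E p \<and> hd p = u \<and> last p = v"

definition connected_graph :: "'a set \<Rightarrow> ('a \<Rightarrow> 'a \<Rightarrow> bool) \<Rightarrow> bool" where
  "connected_graph V E \<longleftrightarrow> (\<forall>u\<in>V. \<forall>v\<in>V. \<exists>p. walk_betw V E u p v)"

definition dist :: "'a set \<Rightarrow> ('a \<Rightarrow> 'a \<Rightarrow> bool) \<Rightarrow> 'a \<Rightarrow> 'a \<Rightarrow> nat" where
  "dist V E u v = (LEAST n. \<exists>p. walk_betw V E u p v \<and> length p = Suc n)"

text \<open>Partial cube: connected graph isometrically embeddable in a hypercube Q_n,
  whose vertices are the subsets of {..<n} with Hamming distance = size of symmetric difference.\<close>
definition partial_cube :: "'a set \<Rightarrow> ('a \<Rightarrow> 'a \<Rightarrow> bool) \<Rightarrow> bool" where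
  "partial_cube V E \<longleftrightarrow> graph V E \<and> connected_graph V E \<and>
     (\<exists>(n::nat) (f :: 'a \<Rightarrow> nat set). (\<forall>v\<in>V. f v \<subseteq> {..<n}) \<and>
        (\<forall>u\<in>V. \<forall>v\<in>V. dist V E u v = card ((f u - f v) \<union> (f v - f u))))"

text \<open>The relation Theta on edges (edges given as ordered pairs; the relation is
  invariant under reorienting both edges).\<close>
definition Theta :: "'a set \<Rightarrow> ('a \<Rightarrow> 'a \<Rightarrow> bool) \<Rightarrow> 'a \<times> 'a \<Rightarrow> 'a \<times> 'a \<Rightarrow> bool" where
  "Theta V E e f \<longleftrightarrow> (case e of (a, b) \<Rightarrow> case f of (x, y) \<Rightarrow>
      dist V E a x + dist V E b y \<noteq> dist V E a y + dist V E b x)"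

definition diam :: "'a set \<Rightarrow> ('a \<Rightarrow> 'a \<Rightarrow> bool) \<Rightarrow> nat" where
  "diam V E = Max {dist V E u v | u v. u \<in> V \<and> v \<in> V}"

definition harmonic_even :: "'a set \<Rightarrow> ('a \<Rightarrow> 'a \<Rightarrow> bool) \<Rightarrow> bool" where
  "harmonic_even V E \<longleftrightarrow>
     (\<forall>v\<in>V. \<exists>!w. w \<in> V \<and> dist V E v w = diam V E) \<and>
     (\<forall>u v. E u v \<longrightarrow> E (THE w. w \<in> V \<and> dist V E u w = diam V E)
                          (THE w. w \<in> V \<and> dist V E v w = diam V E))"

definition is_cycle :: "'a set \<Rightarrow> ('a \<Rightarrow> 'a \<Rightarrow> bool) \<Rightarrow> 'a list \<Rightarrow> bool" where
  "is_cycle V E cs \<longleftrightarrow> length cs \<ge> 3 \<and> distinct cs \<and> set cs \<subseteq> V \<and>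
     (\<forall>i < length cs. E (cs ! i) (cs ! ((i + 1) mod length cs)))"

definition cycle_edges :: "'a list \<Rightarrow> ('a \<times> 'a) set" where
  "cycle_edges cs = {(cs ! i, cs ! ((i + 1) mod length cs)) | i. i < length cs} \<union>
                    {(cs ! ((i + 1) mod length cs), cs ! i) | i. i < length cs}"

definition convex_subgraph :: "'a set \<Rightarrow> ('a \<Rightarrow> 'a \<Rightarrow> bool) \<Rightarrow> 'a set \<Rightarrow> ('a \<times> 'a) set \<Rightarrow> bool" where
  "convex_subgraph V E VH EH \<longleftrightarrow>
     (\<forall>u\<in>VH. \<forall>v\<in>VH. \<forall>p. walk_betw V E u p v \<and> length p = Suc (dist V E u v) \<longrightarrow>
        set p \<subseteq> VH \<and> (\<forall>i. Suc i < length p \<longrightarrow> (p ! i, p ! Suc i) \<in> EH))"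

definition convex_cycle :: "'a set \<Rightarrow> ('a \<Rightarrow> 'a \<Rightarrow> bool) \<Rightarrow> 'a list \<Rightarrow> bool" where
  "convex_cycle V E cs \<longleftrightarrow> is_cycle V E cs \<and> convex_subgraph V E (set cs) (cycle_edges cs)"

end

theory Submission
  imports Defs
begin

(*
  Embed G isometrically into a hypercube.  Every edge then flips exactly one coordinate, edges
  flipping the same coordinate are Theta-related, and the coordinates separating u and v are
  exactly those crossed by a geodesic from u to v.  In a harmonic-even partial cube the set of
  coordinates separating a vertex v from its antipode is independent of v and contains every
  coordinate.

  Let i and j be the (different) coordinates of ab and cd, and call a step of a walk marked if
  it flips j between two vertices lying on the same side of coordinate i as b.  Following
  geodesics b, antipode a, antipode b, a, b gives a closed walk with exactly one marked step.
  A shortest closed walk w with an odd number of marked steps is an isometric cycle: a shortcut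
  between two of its vertices would split it into two shorter closed walks, one of them odd.
  So w has even length at least 4, opposite steps of w flip the same coordinate, and an exchange
  argument with three shorter closed walks shows that an edge leaving w in a coordinate crossed
  by w ends on w.  Hence every geodesic between vertices of w stays on w, i.e. w is convex.
  Finally w crosses j (it has marked steps) and i (otherwise its marked steps would be all its
  j-steps, an even number).
*)

section \<open>Counting steps of lists\<close>

fun count_steps :: "('a \<Rightarrow> 'a \<Rightarrow> bool) \<Rightarrow> 'a list \<Rightarrow> nat" where
  "count_steps P (x # y # r) = (if P x y then 1 else 0) + count_steps P (y # r)"
| "count_steps P _ = 0"

lemma count_steps_append_Cons:
  "count_steps P (xs @ y # ys) = count_steps P (xs @ [y]) + count_steps P (y # ys)"
  by (induction xs rule: induct_list012) auto

lemma count_steps_rev: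
  assumes "\<And>x y. P x y = P y x"
  shows "count_steps P (rev p) = count_steps P p"
proof (induction p rule: induct_list012)
  case (3 x y r)
  have "count_steps P (rev (x # y # r)) = count_steps P (rev r @ [y]) + count_steps P [y, x]"
    using count_steps_append_Cons[of P "rev r" y "[x]"] by simp
  then show ?case using 3 assms[of x y] by simp
qed auto

lemma count_steps_mono: "(\<And>x y. P x y \<Longrightarrow> Q x y) \<Longrightarrow> count_steps P p \<le> count_steps Q p"
  by (induction P p rule: count_steps.induct) auto

lemma count_steps_pos_iff:
  "0 < count_steps P p \<longleftrightarrow> (\<exists>s. Suc s < length p \<and> P (p ! s) (p ! Suc s))"
proof (induction P p rule: count_steps.induct)
  case (1 P x y r)
  show ?case
  proof
    assume "0 < count_steps P (x # y # r)"
    then show "\<exists>s. Suc s < length (x # y # r) \<and> P ((x # y # r) ! s) ((x # y # r) ! Suc s)"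
      using 1 by (cases "P x y") (auto intro: exI[of _ 0] exI[of _ "Suc _"])
  next
    assume "\<exists>s. Suc s < length (x # y # r) \<and> P ((x # y # r) ! s) ((x # y # r) ! Suc s)"
    then obtain s where "Suc s < length (x # y # r)" "P ((x # y # r) ! s) ((x # y # r) ! Suc s)"
      by blast
    then show "0 < count_steps P (x # y # r)" using 1 by (cases s) auto
  qed
qed auto

definition glue :: "'a list \<Rightarrow> 'a list \<Rightarrow> 'a list" (infixl "\<oplus>" 65) where
  "p \<oplus> q = p @ tl q"

lemma length_glue: "q \<noteq> [] \<Longrightarrow> length (p \<oplus> q) = length p + length q - 1"
  unfolding glue_def by (cases q) auto

lemma hd_glue: "p \<noteq> [] \<Longrightarrow> hd (p \<oplus> q) = hd p"
  unfolding glue_def by (cases p) auto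

lemma last_glue: "p \<noteq> [] \<Longrightarrow> q \<noteq> [] \<Longrightarrow> last p = hd q \<Longrightarrow> last (p \<oplus> q) = last q"
  unfolding glue_def by (cases q) auto

lemma set_glue: "p \<noteq> [] \<Longrightarrow> q \<noteq> [] \<Longrightarrow> last p = hd q \<Longrightarrow> set (p \<oplus> q) = set p \<union> set q"
  unfolding glue_def by (cases q) auto

lemma count_steps_glue:
  assumes "p \<noteq> []" "q \<noteq> []" "last p = hd q"
  shows "count_steps P (p \<oplus> q) = count_steps P p + count_steps P q"
proof -
  have p: "p = butlast p @ [hd q]" and q: "q = hd q # tl q"
    using assms by (metis append_butlast_last_id, simp)
  have "p \<oplus> q = butlast p @ hd q # tl q"
    unfolding glue_def by (subst p) simp
  then show ?thesis using count_steps_append_Cons p q by metis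
qed

definition segment :: "nat \<Rightarrow> nat \<Rightarrow> 'a list \<Rightarrow> 'a list" where
  "segment i j w = take (Suc j - i) (drop i w)"

lemma length_segment: "i \<le> j \<Longrightarrow> j < length w \<Longrightarrow> length (segment i j w) = Suc j - i"
  unfolding segment_def by simp

lemma nth_segment: "i \<le> j \<Longrightarrow> j < length w \<Longrightarrow> s \<le> j - i \<Longrightarrow> segment i j w ! s = w ! (i + s)"
  unfolding segment_def by simp

lemma segment_not_Nil: "i \<le> j \<Longrightarrow> j < length w \<Longrightarrow> segment i j w \<noteq> []"
  using length_segment by fastforce

lemma hd_segment: "i \<le> j \<Longrightarrow> j < length w \<Longrightarrow> hd (segment i j w) = w ! i"
  using nth_segment[of i j w 0] segment_not_Nil[of i j w] by (simp add: hd_conv_nth)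

lemma last_segment: "i \<le> j \<Longrightarrow> j < length w \<Longrightarrow> last (segment i j w) = w ! j"
  using nth_segment[of i j w "j - i"] segment_not_Nil[of i j w] length_segment[of i j w]
  by (simp add: last_conv_nth)

lemma set_segment_subset: "set (segment i j w) \<subseteq> set w"
  unfolding segment_def by (meson order_trans set_drop_subset set_take_subset)

lemma segment_whole: "w \<noteq> [] \<Longrightarrow> segment 0 (length w - 1) w = w"
  unfolding segment_def by simp

lemma glue_segments:
  assumes "i \<le> j" "j \<le> k" "k < length w"
  shows "segment i j w \<oplus> segment j k w = segment i k w"
proof (rule nth_equalityI)
  have ne: "segment j k w \<noteq> []" using assms segment_not_Nil by auto
  show "length (segment i j w \<oplus> segment j k w) = length (segment i k w)"
    using assms ne by (simp add: length_glue length_segment)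
  fix s assume "s < length (segment i j w \<oplus> segment j k w)"
  then have s: "s \<le> k - i" using assms ne by (simp add: length_glue length_segment)
  show "(segment i j w \<oplus> segment j k w) ! s = segment i k w ! s"
  proof (cases "s < Suc j - i")
    case True
    then show ?thesis using assms s unfolding glue_def by (simp add: nth_append length_segment nth_segment)
  next
    case False
    have "tl (segment j k w) ! (s - (Suc j - i)) = segment j k w ! Suc (s - (Suc j - i))"
      using ne assms s False by (simp add: nth_tl length_segment)
    also have "\<dots> = w ! (j + Suc (s - (Suc j - i)))" using assms s False by (intro nth_segment) auto
    also have "j + Suc (s - (Suc j - i)) = i + s" using assms False by auto
    finally show ?thesis
      using assms s False unfolding glue_def by (simp add: nth_append length_segment nth_segment)
  qed
qed

lemma count_steps_segments:
  assumes "i \<le> j" "j \<le> k" "k < length w"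
  shows "count_steps P (segment i k w) = count_steps P (segment i j w) + count_steps P (segment j k w)"
  using assms glue_segments[OF assms] count_steps_glue[of "segment i j w" "segment j k w" P]
  by (simp add: segment_not_Nil hd_segment last_segment)

lemma count_steps_segment_le:
  assumes "i \<le> j" "j < length w"
  shows "count_steps P (segment i j w) \<le> count_steps P w"
proof -
  have "w \<noteq> []" using assms by auto
  then have "count_steps P w = count_steps P (segment 0 i w) + count_steps P (segment i (length w - 1) w)"
    using assms count_steps_segments[of 0 i "length w - 1" w P] segment_whole[of w] by simp
  moreover have "count_steps P (segment i (length w - 1) w)
      = count_steps P (segment i j w) + count_steps P (segment j (length w - 1) w)"
    using assms count_steps_segments[of i j "length w - 1" w P] by simp
  ultimately show ?thesis by simp
qed

section \<open>Walks\<close>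

lemma walk_Nil [simp]: "\<not> walk V E []"
  by (simp add: walk_def)

lemma walk_single [simp]: "walk V E [x] \<longleftrightarrow> x \<in> V"
  by (simp add: walk_def)

lemma walk_Cons_Cons [simp]: "walk V E (x # y # r) \<longleftrightarrow> x \<in> V \<and> E x y \<and> walk V E (y # r)"
  unfolding walk_def by (auto simp: less_Suc_eq_0_disj)

lemma walk_not_Nil: "walk V E p \<Longrightarrow> p \<noteq> []"
  by (simp add: walk_def)

lemma walk_nth_edge: "walk V E p \<Longrightarrow> Suc i < length p \<Longrightarrow> E (p ! i) (p ! Suc i)"
  by (simp add: walk_def)

lemma walk_ends_in_V: "walk V E p \<Longrightarrow> hd p \<in> V \<and> last p \<in> V"
  unfolding walk_def by auto

lemma walk_glue: "walk V E p \<Longrightarrow> walk V E q \<Longrightarrow> last p = hd q \<Longrightarrow> walk V E (p \<oplus> q)"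
proof (induction p rule: induct_list012)
  case (2 x)
  then show ?case unfolding glue_def by (cases q) auto
next
  case (3 x y r)
  then show ?case by (simp add: glue_def)
qed simp

lemma walk_betw_glue:
  "walk_betw V E u p v \<Longrightarrow> walk_betw V E v q x \<Longrightarrow> walk_betw V E u (p \<oplus> q) x"
  unfolding walk_betw_def by (metis walk_glue hd_glue last_glue walk_Nil)

lemma count_steps_glue_walk_betw:
  "walk_betw V E u p v \<Longrightarrow> walk_betw V E v q x \<Longrightarrow>
    count_steps P (p \<oplus> q) = count_steps P p + count_steps P q"
  by (rule count_steps_glue) (auto simp: walk_betw_def walk_def)

lemma length_glue_walk_betw:
  "walk_betw V E u p v \<Longrightarrow> walk_betw V E v q x \<Longrightarrow> length (p \<oplus> q) = length p + length q - 1"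
  by (rule length_glue) (auto simp: walk_betw_def walk_def)

lemma walk_rev: assumes "graph V E" shows "walk V E p \<Longrightarrow> walk V E (rev p)"
proof (induction p rule: induct_list012)
  case (3 x y r)
  have "rev (x # y # r) = rev (y # r) \<oplus> [y, x]" by (simp add: glue_def)
  moreover have "walk V E [y, x]" using 3 assms unfolding graph_def by auto
  moreover have "last (rev (y # r)) = y" by simp
  ultimately show ?case using 3 walk_glue[of V E "rev (y # r)" "[y, x]"] by simp
qed simp_all

lemma walk_betw_rev: "graph V E \<Longrightarrow> walk_betw V E u p v \<Longrightarrow> walk_betw V E v (rev p) u"
  unfolding walk_betw_def by (auto simp: walk_rev hd_rev last_rev)

lemma walk_betw_segment:
  assumes "walk V E w" "i \<le> j" "j < length w"
  shows "walk_betw V E (w ! i) (segment i j w) (w ! j)"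
  unfolding walk_betw_def walk_def
proof (intro conjI allI impI)
  show "segment i j w \<noteq> []" "hd (segment i j w) = w ! i" "last (segment i j w) = w ! j"
    using assms segment_not_Nil hd_segment last_segment by auto
  show "set (segment i j w) \<subseteq> V"
    using assms set_segment_subset unfolding walk_def by fastforce
  fix s assume "Suc s < length (segment i j w)"
  then have s: "Suc s \<le> j - i" using assms by (simp add: length_segment)
  have "segment i j w ! s = w ! (i + s)" "segment i j w ! Suc s = w ! Suc (i + s)"
    using assms s nth_segment[of i j w s] nth_segment[of i j w "Suc s"] by simp_all
  moreover have "E (w ! (i + s)) (w ! Suc (i + s))"
    using assms(1) by (rule walk_nth_edge) (use assms s in auto)
  ultimately show "E (segment i j w ! s) (segment i j w ! Suc s)" by simp
qed

section \<open>Partial cubes as isometric subgraphs of hypercubes\<close>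

lemma card_toggle:
  assumes "finite X"
  shows "card {k. (k \<in> X) \<noteq> (k = c)} = (if c \<in> X then card X - 1 else Suc (card X))"
proof (cases "c \<in> X")
  case True
  then have "{k. (k \<in> X) \<noteq> (k = c)} = X - {c}" by auto
  then show ?thesis using True assms by simp
next
  case False
  then have "{k. (k \<in> X) \<noteq> (k = c)} = insert c X" by auto
  then show ?thesis using False assms by simp
qed

locale hypercube_embedding =
  fixes V :: "'a set" and E :: "'a \<Rightarrow> 'a \<Rightarrow> bool" and n :: nat and f :: "'a \<Rightarrow> nat set"
  assumes graph: "graph V E" and connected: "connected_graph V E"
    and f_bounded: "\<And>v. v \<in> V \<Longrightarrow> f v \<subseteq> {..<n}"
    and dist_f: "\<And>u v. u \<in> V \<Longrightarrow> v \<in> V \<Longrightarrow> dist V E u v = card ((f u - f v) \<union> (f v - f u))"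

lemma partial_cube_embedding:
  assumes "partial_cube V E"
  obtains n f where "hypercube_embedding V E n f"
  using assms unfolding partial_cube_def hypercube_embedding_def by blast

context hypercube_embedding
begin

definition sep :: "'a \<Rightarrow> 'a \<Rightarrow> nat set" where
  "sep u v = (f u - f v) \<union> (f v - f u)"

lemma sep_iff: "k \<in> sep u v \<longleftrightarrow> (k \<in> f u) \<noteq> (k \<in> f v)"
  unfolding sep_def by auto

lemma sep_sym: "sep u v = sep v u"
  unfolding sep_def by auto

lemma sep_self [simp]: "sep v v = {}"
  unfolding sep_def by auto

lemma finite_sep: "u \<in> V \<Longrightarrow> v \<in> V \<Longrightarrow> finite (sep u v)"
  unfolding sep_def using f_bounded by (meson finite_Diff finite_UnI finite_lessThan finite_subset)

lemma dist_eq_card_sep: "u \<in> V \<Longrightarrow> v \<in> V \<Longrightarrow> dist V E u v = card (sep u v)"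
  unfolding sep_def by (rule dist_f)

lemma edge_sym: "E x y \<Longrightarrow> E y x"
  using graph unfolding graph_def by blast

lemma edge_in_V: "E x y \<Longrightarrow> x \<in> V" "E x y \<Longrightarrow> y \<in> V"
  using graph unfolding graph_def by blast+

lemma edge_neq: "E x y \<Longrightarrow> x \<noteq> y"
  using graph unfolding graph_def by blast

lemma card_sep_le_length:
  assumes "walk V E p"
  shows "card (sep (hd p) (last p)) \<le> length p - 1"
proof -
  have "walk_betw V E (hd p) p (last p) \<and> length p = Suc (length p - 1)"
    using assms by (auto simp: walk_betw_def walk_def)
  then have "dist V E (hd p) (last p) \<le> length p - 1"
    unfolding dist_def by (intro Least_le) blast
  then show ?thesis using walk_ends_in_V[OF assms] dist_eq_card_sep by simp
qed

lemma shortest_walk_exists: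
  assumes "u \<in> V" "v \<in> V"
  shows "\<exists>p. walk_betw V E u p v \<and> length p = Suc (dist V E u v)"
proof -
  obtain p where "walk_betw V E u p v"
    using connected assms unfolding connected_graph_def by blast
  moreover have "length p = Suc (length p - 1)"
    using calculation by (auto simp: walk_betw_def walk_def)
  ultimately have "\<exists>m p. walk_betw V E u p v \<and> length p = Suc m" by blast
  then show ?thesis unfolding dist_def by (rule LeastI_ex)
qed

lemma eq_if_sep_empty:
  assumes "u \<in> V" "v \<in> V" "sep u v = {}"
  shows "u = v"
proof -
  have "dist V E u v = 0" using assms dist_eq_card_sep by simp
  then obtain p where p: "walk_betw V E u p v" "length p = Suc 0"
    using shortest_walk_exists[OF assms(1,2)] by auto
  then obtain x where "p = [x]" by (auto simp: length_Suc_conv)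
  then show ?thesis using p unfolding walk_betw_def by auto
qed

definition edge_coord :: "'a \<Rightarrow> 'a \<Rightarrow> nat" where
  "edge_coord x y = the_elem (sep x y)"

abbreviation crosses :: "nat \<Rightarrow> 'a \<Rightarrow> 'a \<Rightarrow> bool" where
  "crosses k x y \<equiv> edge_coord x y = k"

lemma edge_coord_sym: "edge_coord x y = edge_coord y x"
  unfolding edge_coord_def by (simp add: sep_sym)

lemma sep_edge: 
  assumes "E x y"
  shows "sep x y = {edge_coord x y}"
proof -
  have "walk V E [x, y]" using assms edge_in_V by simp
  then have "card (sep x y) \<le> 1" using card_sep_le_length by fastforce
  moreover have "sep x y \<noteq> {}" using eq_if_sep_empty assms edge_in_V edge_neq by blast
  moreover have "finite (sep x y)" using assms edge_in_V finite_sep by blast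
  ultimately have "card (sep x y) = 1" by (simp add: le_antisym Suc_leI card_gt_0_iff)
  then show ?thesis unfolding edge_coord_def by (metis card_1_singletonE the_elem_eq)
qed

lemma mem_f_edge: "E x y \<Longrightarrow> k \<in> f y \<longleftrightarrow> (k \<in> f x) \<noteq> (k = edge_coord x y)"
  using sep_edge[of x y] sep_iff[of k x y] by auto

lemma sep_edge_left: "E x y \<Longrightarrow> sep x z = {k. (k \<in> sep y z) \<noteq> (k = edge_coord x y)}"
  using sep_edge[of x y] sep_iff by auto

lemma sep_edge_right: "E y z \<Longrightarrow> sep x z = {k. (k \<in> sep x y) \<noteq> (k = edge_coord y z)}"
  using sep_edge[of y z] sep_iff by auto

lemma card_sep_edge_left:
  assumes "E x y" "z \<in> V"
  shows "card (sep x z) = (if edge_coord x y \<in> sep y z then card (sep y z) - 1 else Suc (card (sep y z)))"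
  unfolding sep_edge_left[OF assms(1)]
  by (rule card_toggle) (use assms edge_in_V finite_sep in blast)

lemma card_sep_edge_right:
  assumes "x \<in> V" "E y z"
  shows "card (sep x z) = (if edge_coord y z \<in> sep x y then card (sep x y) - 1 else Suc (card (sep x y)))"
  unfolding sep_edge_right[OF assms(2)]
  by (rule card_toggle) (use assms edge_in_V finite_sep in blast)

lemma sep_walk_iff_odd:
  "walk V E p \<Longrightarrow> k \<in> sep (hd p) (last p) \<longleftrightarrow> odd (count_steps (crosses k) p)"
proof (induction p rule: induct_list012)
  case (3 x y r)
  then have "k \<in> sep y (last (y # r)) \<longleftrightarrow> odd (count_steps (crosses k) (y # r))" by simp
  moreover have "k \<in> sep x (last (y # r)) \<longleftrightarrow> (k \<in> sep y (last (y # r))) \<noteq> (edge_coord x y = k)"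
    using 3 sep_edge_left[of x y "last (y # r)"] by auto
  ultimately show ?case by (cases "edge_coord x y = k") simp_all
qed simp_all

lemma even_card_sep_plus_length:
  "walk V E p \<Longrightarrow> even (card (sep (hd p) (last p)) + (length p - 1))"
proof (induction p rule: induct_list012)
  case (3 x y r)
  define l where "l = last (y # r)"
  have w: "walk V E (y # r)" and e: "E x y" using 3 by auto
  then have l: "l \<in> V" using walk_ends_in_V unfolding l_def by blast
  have "even (card (sep y l) + length r)" using 3 unfolding l_def by simp
  moreover have "0 < card (sep y l)" if "edge_coord x y \<in> sep y l"
    using that finite_sep[OF edge_in_V(2)[OF e] l] card_gt_0_iff by blast
  ultimately have "even (card (sep x l) + Suc (length r))"
    using card_sep_edge_left[OF e l] by (auto split: if_splits)
  then show ?case unfolding l_def by simp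
qed auto

definition geodesic :: "'a list \<Rightarrow> bool" where
  "geodesic p \<longleftrightarrow> walk V E p \<and> card (sep (hd p) (last p)) = length p - 1"

lemma geodesic_Cons_Cons:
  assumes "geodesic (x # y # r)"
  shows "geodesic (y # r) \<and> edge_coord x y \<notin> sep y (last (y # r))"
proof -
  have w: "walk V E (y # r)" and e: "E x y" using assms unfolding geodesic_def by auto
  define l where "l = last (y # r)"
  have l: "l \<in> V" using w walk_ends_in_V unfolding l_def by blast
  have "card (sep y l) \<le> length r" using card_sep_le_length[OF w] unfolding l_def by simp
  moreover have "card (sep x l) = Suc (length r)"
    using assms unfolding geodesic_def l_def by simp
  ultimately have "edge_coord x y \<notin> sep y l \<and> card (sep y l) = length r"
    using card_sep_edge_left[OF e l] by (auto split: if_splits)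
  then show ?thesis using w unfolding geodesic_def l_def by simp
qed

lemma count_crosses_geodesic:
  "geodesic p \<Longrightarrow> count_steps (crosses k) p = (if k \<in> sep (hd p) (last p) then 1 else 0)"
proof (induction p rule: induct_list012)
  case (3 x y r)
  have g: "geodesic (y # r)" and c: "edge_coord x y \<notin> sep y (last (y # r))"
    using geodesic_Cons_Cons[OF "3.prems"] by auto
  have e: "E x y" using "3.prems" unfolding geodesic_def by simp
  have "count_steps (crosses k) (y # r) = (if k \<in> sep y (last (y # r)) then 1 else 0)"
    using "3.IH"(2) g by simp
  moreover have "k \<in> sep x (last (y # r)) \<longleftrightarrow> (k \<in> sep y (last (y # r))) \<noteq> (edge_coord x y = k)"
    using sep_edge_left[OF e] by auto
  ultimately show ?case using c by (cases "edge_coord x y = k") simp_all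
qed (simp_all add: geodesic_def)

lemma geodesic_step:
  assumes "geodesic p" "Suc s < length p"
  shows "edge_coord (p ! s) (p ! Suc s) \<in> sep (hd p) (last p)"
proof -
  have "0 < count_steps (crosses (edge_coord (p ! s) (p ! Suc s))) p"
    using assms(2) count_steps_pos_iff by blast
  then show ?thesis using count_crosses_geodesic[OF assms(1)] by (simp split: if_splits)
qed

lemma geodesic_if_shortest: "walk_betw V E u p v \<Longrightarrow> length p = Suc (dist V E u v) \<Longrightarrow> geodesic p"
  unfolding geodesic_def walk_betw_def using walk_ends_in_V[of V E p] dist_eq_card_sep by auto

lemma geodesic_exists: "u \<in> V \<Longrightarrow> v \<in> V \<Longrightarrow> \<exists>p. walk_betw V E u p v \<and> geodesic p"
  using shortest_walk_exists geodesic_if_shortest by blast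

lemma Theta_if_edge_coord_eq:
  assumes ab: "E a b" and xy: "E x y" and coord: "edge_coord a b = edge_coord x y"
  shows "Theta V E (a, b) (x, y)"
proof -
  have V: "a \<in> V" "b \<in> V" "x \<in> V" "y \<in> V" using ab xy edge_in_V by auto
  define c where "c = edge_coord x y"
  have c: "edge_coord a b = c" "edge_coord x y = c" using coord unfolding c_def by simp_all
  define t where "t = (if c \<in> sep a x then card (sep a x) - 1 else Suc (card (sep a x)))"
  have "sep b y = sep a x" using mem_f_edge[OF ab] mem_f_edge[OF xy] c unfolding sep_def by auto
  moreover have "card (sep a y) = t" using card_sep_edge_right[OF V(1) xy] c unfolding t_def by simp
  moreover have "card (sep b x) = t"
    using card_sep_edge_left[OF edge_sym[OF ab] V(3)] edge_coord_sym[of a b] c unfolding t_def by simp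
  moreover have "t \<noteq> card (sep a x)"
    using card_gt_0_iff[of "sep a x"] finite_sep[OF V(1,3)] unfolding t_def by auto
  ultimately show ?thesis
    unfolding Theta_def using V dist_eq_card_sep by simp
qed

lemma crosses_if_in_sep:
  assumes w: "walk V E w" and "u \<in> set w" "v \<in> set w" "k \<in> sep u v"
  shows "0 < count_steps (crosses k) w"
proof -
  obtain i j where ij: "i < length w" "j < length w" "w ! i = u" "w ! j = v"
    using assms(2,3) by (auto simp: in_set_conv_nth)
  define a where "a = min i j"
  define b where "b = max i j"
  have ab: "a \<le> b" "b < length w" "k \<in> sep (w ! a) (w ! b)"
    using ij assms sep_sym unfolding a_def b_def by (auto simp: min_def max_def)
  moreover have "walk_betw V E (w ! a) (segment a b w) (w ! b)" using walk_betw_segment[OF w ab(1,2)] .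
  ultimately have "odd (count_steps (crosses k) (segment a b w))"
    using sep_walk_iff_odd[of "segment a b w" k] unfolding walk_betw_def by simp
  then have "0 < count_steps (crosses k) (segment a b w)" by (rule odd_pos)
  then show ?thesis using count_steps_segment_le[OF ab(1,2), of "crosses k"] by linarith
qed

definition crosses_on_side :: "nat \<Rightarrow> nat \<Rightarrow> bool \<Rightarrow> 'a \<Rightarrow> 'a \<Rightarrow> bool" where
  "crosses_on_side j i g x y \<longleftrightarrow> edge_coord x y = j \<and> (i \<in> f x) = g \<and> (i \<in> f y) = g"

lemma crosses_on_side_sym: "crosses_on_side j i g x y = crosses_on_side j i g y x"
  unfolding crosses_on_side_def using edge_coord_sym by auto

lemma count_crosses_on_side_avoiding:
  "walk V E p \<Longrightarrow> count_steps (crosses i) p = 0 \<Longrightarrow>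
    count_steps (crosses_on_side j i g) p = (if (i \<in> f (hd p)) = g then count_steps (crosses j) p else 0)"
proof (induction p rule: induct_list012)
  case (3 x y r)
  then have c: "edge_coord x y \<noteq> i" and avoid: "count_steps (crosses i) (y # r) = 0"
    by (simp_all split: if_splits)
  then have "i \<in> f y \<longleftrightarrow> i \<in> f x" using mem_f_edge[of x y i] 3 by simp
  moreover have "count_steps (crosses_on_side j i g) (y # r) =
      (if (i \<in> f y) = g then count_steps (crosses j) (y # r) else 0)"
    using "3.IH"(2) 3 avoid by simp
  ultimately show ?case unfolding crosses_on_side_def by simp
qed simp_all

lemma count_crosses_on_side_le: "count_steps (crosses_on_side j i g) p \<le> count_steps (crosses j) p"
  by (rule count_steps_mono) (simp add: crosses_on_side_def)

lemma count_crosses_on_side_geodesic: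
  assumes p: "walk_betw V E u p v" "geodesic p"
  shows "i \<notin> sep u v \<Longrightarrow>
      count_steps (crosses_on_side j i g) p = (if (i \<in> f u) = g \<and> j \<in> sep u v then 1 else 0)"
    and "j \<notin> sep u v \<Longrightarrow> count_steps (crosses_on_side j i g) p = 0"
proof -
  have crossings: "count_steps (crosses k) p = (if k \<in> sep u v then 1 else 0)" for k
    using count_crosses_geodesic p unfolding walk_betw_def by auto
  show "i \<notin> sep u v \<Longrightarrow>
      count_steps (crosses_on_side j i g) p = (if (i \<in> f u) = g \<and> j \<in> sep u v then 1 else 0)"
    using count_crosses_on_side_avoiding crossings p unfolding walk_betw_def by auto
  show "j \<notin> sep u v \<Longrightarrow> count_steps (crosses_on_side j i g) p = 0"
    using count_crosses_on_side_le[of j i g p] crossings[of j] by simp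
qed

lemma closed_walk_odd_crosses_on_side:
  assumes w: "walk V E p" "hd p = last p" and odd: "odd (count_steps (crosses_on_side j i g) p)"
  shows "0 < count_steps (crosses i) p" "0 < count_steps (crosses j) p"
proof -
  have "0 < count_steps (crosses_on_side j i g) p" using odd by (rule odd_pos)
  then show "0 < count_steps (crosses j) p"
    using count_crosses_on_side_le[of j i g p] by linarith
  have "even (count_steps (crosses j) p)" using sep_walk_iff_odd[OF w(1)] w(2) by simp
  show "0 < count_steps (crosses i) p"
  proof (rule ccontr)
    assume "\<not> 0 < count_steps (crosses i) p"
    then have "count_steps (crosses_on_side j i g) p =
        (if (i \<in> f (hd p)) = g then count_steps (crosses j) p else 0)"
      using count_crosses_on_side_avoiding[OF w(1)] by simp
    then show False using odd \<open>even (count_steps (crosses j) p)\<close> by (simp split: if_splits)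
  qed
qed

end

section \<open>A shortest closed walk with an odd number of marked steps\<close>

locale minimal_odd_walk = hypercube_embedding +
  fixes P :: "'a \<Rightarrow> 'a \<Rightarrow> bool" and w :: "'a list"
  assumes P_sym: "\<And>x y. P x y = P y x"
    and walk_w: "walk V E w" and closed_w: "hd w = last w" and odd_w: "odd (count_steps P w)"
    and shortest: "\<And>p. walk V E p \<Longrightarrow> hd p = last p \<Longrightarrow> odd (count_steps P p) \<Longrightarrow> length w \<le> length p"
begin

abbreviation L :: nat where "L \<equiv> length w - 1"

lemma w_not_Nil: "w \<noteq> []"
  using walk_w by auto

lemma length_w: "length w = Suc L"
  using w_not_Nil by simp

lemma nth_L: "w ! L = w ! 0"
  using closed_w w_not_Nil by (simp add: hd_conv_nth last_conv_nth)

lemma nth_in_V: "s \<le> L \<Longrightarrow> w ! s \<in> V"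
  using walk_w length_w unfolding walk_def by (metis le_imp_less_Suc nth_mem subsetD)

lemma segment_w:
  "i \<le> j \<Longrightarrow> j \<le> L \<Longrightarrow> walk_betw V E (w ! i) (segment i j w) (w ! j) \<and> length (segment i j w) = Suc j - i"
  using walk_betw_segment[OF walk_w] length_segment length_w by (metis le_imp_less_Suc)

lemma count_steps_w:
  "i \<le> j \<Longrightarrow> j \<le> L \<Longrightarrow>
    count_steps Q w = count_steps Q (segment 0 i w) + count_steps Q (segment i j w) + count_steps Q (segment j L w)"
  using count_steps_segments[of 0 i L w Q] count_steps_segments[of i j L w Q] segment_whole[OF w_not_Nil]
    length_w by simp

lemma even_if_shorter_loop:
  assumes "walk_betw V E u p v" "walk_betw V E v q u" "length p + length q \<le> length w"
  shows "even (count_steps P p + count_steps P q)"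
proof (rule ccontr)
  assume odd: "\<not> even (count_steps P p + count_steps P q)"
  have ne: "p \<noteq> []" "q \<noteq> []" using assms unfolding walk_betw_def by auto
  have "walk_betw V E u (p \<oplus> q) u" using walk_betw_glue[OF assms(1,2)] .
  moreover have "count_steps P (p \<oplus> q) = count_steps P p + count_steps P q"
    using count_steps_glue_walk_betw[OF assms(1,2)] .
  ultimately have "length w \<le> length (p \<oplus> q)" using shortest odd unfolding walk_betw_def by simp
  moreover have "length (p \<oplus> q) = length p + length q - 1" using length_glue_walk_betw[OF assms(1,2)] .
  moreover have "0 < length p" using ne by simp
  ultimately show False using assms(3) by linarith
qed

(* Closing both arcs of w between positions i and j by a geodesic R gives two closed walks
   whose marked counts add up to that of w plus twice that of R; one of them is odd. *)
lemma cyclic_dist_le_card_sep: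
  assumes ij: "i \<le> j" "j \<le> L"
  shows "min (j - i) (L - (j - i)) \<le> card (sep (w ! i) (w ! j))"
proof -
  obtain R where R: "walk_betw V E (w ! i) R (w ! j)" "geodesic R"
    using geodesic_exists nth_in_V ij by (meson order_trans)
  have len_R: "length R = Suc (card (sep (w ! i) (w ! j)))"
    using R walk_not_Nil unfolding geodesic_def walk_betw_def by fastforce
  have A: "walk_betw V E (w ! 0) (segment 0 i w) (w ! i)" and B: "walk_betw V E (w ! i) (segment i j w) (w ! j)"
    and C: "walk_betw V E (w ! j) (segment j L w) (w ! 0)"
    using segment_w[of 0 i] segment_w[of i j] segment_w[of j L] ij nth_L by auto
  have rev_R: "walk_betw V E (w ! j) (rev R) (w ! i)" using walk_betw_rev[OF graph R(1)] .
  have CA: "walk_betw V E (w ! j) (segment j L w \<oplus> segment 0 i w) (w ! i)"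
    using walk_betw_glue[OF C A] .
  have "count_steps P (segment j L w \<oplus> segment 0 i w)
      = count_steps P (segment j L w) + count_steps P (segment 0 i w)"
    using count_steps_glue_walk_betw[OF C A] .
  moreover have "count_steps P (rev R) = count_steps P R" using count_steps_rev P_sym by blast
  ultimately have "odd (count_steps P (segment i j w) + count_steps P (rev R))
      \<or> odd (count_steps P (segment j L w \<oplus> segment 0 i w) + count_steps P R)"
    using odd_w count_steps_w[OF ij, of P] by auto
  then have "length w < length (segment i j w) + length (rev R)
      \<or> length w < length (segment j L w \<oplus> segment 0 i w) + length R"
    using even_if_shorter_loop B rev_R CA R(1) by (meson not_le)
  moreover have "length (segment i j w) = Suc j - i" "length (rev R) = length R"
    "length (segment j L w \<oplus> segment 0 i w) = Suc L + i - j"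
    using ij segment_w[of 0 i] segment_w[of i j] segment_w[of j L] length_glue_walk_betw[OF C A]
    by auto
  ultimately show ?thesis using ij len_R length_w by (auto simp: min_def)
qed

lemma even_length_ge_4: "even L \<and> 4 \<le> L"
proof -
  have "even L" using even_card_sep_plus_length[OF walk_w] closed_w by simp
  moreover have "L \<noteq> 0"
  proof
    assume "L = 0"
    then obtain x where "w = [x]" using length_w by (auto simp: length_Suc_conv)
    then show False using odd_w by simp
  qed
  moreover have "L \<noteq> 2"
  proof
    assume "L = 2"
    then obtain x y z where "w = [x, y, z]" using length_w by (auto simp: length_Suc_conv numeral_2_eq_2)
    then show False using odd_w closed_w P_sym[of x y] by simp
  qed
  ultimately show ?thesis by presburger
qed

lemma minimal_odd_walk_rev: "minimal_odd_walk V E n f P (rev w)"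
proof (intro minimal_odd_walk.intro minimal_odd_walk_axioms.intro)
  show "walk V E (rev w)" using walk_rev[OF graph walk_w] .
  show "hd (rev w) = last (rev w)" using closed_w w_not_Nil by (simp add: hd_rev last_rev)
  show "odd (count_steps P (rev w))" using odd_w count_steps_rev[of P, OF P_sym] by simp
  show "length (rev w) \<le> length p" if "walk V E p" "hd p = last p" "odd (count_steps P p)" for p
    using shortest that by simp
qed (use P_sym hypercube_embedding_axioms in auto)

definition rotation :: "nat \<Rightarrow> 'a list" where
  "rotation s = segment s L w \<oplus> segment 0 s w"

lemma rotation:
  assumes s: "s \<le> L"
  shows "walk_betw V E (w ! s) (rotation s) (w ! s)" "length (rotation s) = length w"
    "set (rotation s) = set w" "count_steps Q (rotation s) = count_steps Q w"
proof -
  have A: "walk_betw V E (w ! s) (segment s L w) (w ! 0)" "length (segment s L w) = Suc L - s"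
    using segment_w[OF s] nth_L by auto
  have B: "walk_betw V E (w ! 0) (segment 0 s w) (w ! s)" "length (segment 0 s w) = Suc s"
    using segment_w[of 0 s] s by auto
  show "walk_betw V E (w ! s) (rotation s) (w ! s)"
    unfolding rotation_def using walk_betw_glue[OF A(1) B(1)] .
  show "length (rotation s) = length w"
    unfolding rotation_def using length_glue_walk_betw[OF A(1) B(1)] A(2) B(2) s length_w by simp
  have w: "w = segment 0 s w \<oplus> segment s L w"
    using glue_segments[of 0 s L w] s length_w segment_whole[OF w_not_Nil] by simp
  have "set w = set (segment 0 s w) \<union> set (segment s L w)"
    using A B by (subst w, intro set_glue) (auto simp: walk_betw_def walk_def)
  moreover have "set (rotation s) = set (segment s L w) \<union> set (segment 0 s w)"
    using A B unfolding rotation_def by (intro set_glue) (auto simp: walk_betw_def walk_def)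
  ultimately show "set (rotation s) = set w" by blast
  have "count_steps Q w = count_steps Q (segment 0 s w) + count_steps Q (segment s L w)"
    using count_steps_glue_walk_betw[OF B(1) A(1)] w by simp
  then show "count_steps Q (rotation s) = count_steps Q w"
    unfolding rotation_def using count_steps_glue_walk_betw[OF A(1) B(1)] by simp
qed

lemma minimal_odd_walk_rotation:
  assumes "s \<le> L"
  shows "minimal_odd_walk V E n f P (rotation s)"
proof (intro minimal_odd_walk.intro minimal_odd_walk_axioms.intro)
  show "walk V E (rotation s)" "hd (rotation s) = last (rotation s)"
    using rotation(1)[OF assms] unfolding walk_betw_def by auto
  show "odd (count_steps P (rotation s))" using odd_w rotation(4)[OF assms] by simp
  show "length (rotation s) \<le> length p" if "walk V E p" "hd p = last p" "odd (count_steps P p)" for p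
    using shortest that rotation(2)[OF assms] by simp
qed (use P_sym hypercube_embedding_axioms in auto)

lemma length_w_odd:
  obtains m where "length w = Suc (2 * m)" "2 \<le> m"
proof -
  obtain m where "L = 2 * m" using even_length_ge_4 by blast
  then show ?thesis using that even_length_ge_4 length_w by simp
qed

context
  fixes m assumes m: "length w = Suc (2 * m)"
begin

lemma length_w_half: "length w = Suc (2 * m)" "2 \<le> m"
  using m even_length_ge_4 by auto

lemma geodesic_halves: "geodesic (segment 0 m w)" "geodesic (segment m L w)"
proof -
  have "m \<le> card (sep (w ! 0) (w ! m))" "m \<le> card (sep (w ! m) (w ! L))"
    using cyclic_dist_le_card_sep[of 0 m] cyclic_dist_le_card_sep[of m L] length_w_half by auto
  then show "geodesic (segment 0 m w)" "geodesic (segment m L w)"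
    using segment_w[of 0 m] segment_w[of m L] length_w_half
      card_sep_le_length[of "segment 0 m w"] card_sep_le_length[of "segment m L w"]
    unfolding geodesic_def walk_betw_def by auto
qed

lemma crossed_coord_in_sep_half:
  assumes "0 < count_steps (crosses k) w"
  shows "k \<in> sep (w ! 0) (w ! m)"
proof -
  have "count_steps (crosses k) w
      = count_steps (crosses k) (segment 0 m w) + count_steps (crosses k) (segment m L w)"
    using count_steps_segments[of 0 m L w "crosses k"] segment_whole[OF w_not_Nil] length_w_half by simp
  moreover have "sep (w ! m) (w ! L) = sep (w ! 0) (w ! m)" using nth_L sep_sym by simp
  ultimately show ?thesis
    using assms count_crosses_geodesic geodesic_halves segment_w[of 0 m] segment_w[of m L] length_w_half
    unfolding walk_betw_def by (auto split: if_splits)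
qed

lemma opposite_steps_same_coord:
  "edge_coord (w ! (m - 1)) (w ! m) = edge_coord (w ! (L - 1)) (w ! L)"
proof -
  define l1 where "l1 = edge_coord (w ! (m - 1)) (w ! m)"
  define l2 where "l2 = edge_coord (w ! (L - 1)) (w ! L)"
  define Y where "Y = sep (w ! 0) (w ! (m - 1))"
  have e1: "E (w ! (m - 1)) (w ! m)" and e2: "E (w ! L) (w ! (L - 1))"
    using walk_nth_edge[OF walk_w, of "m - 1"] walk_nth_edge[OF walk_w, of "L - 1"] length_w_half edge_sym
    by auto
  have l2: "l2 = edge_coord (w ! L) (w ! (L - 1))" unfolding l2_def by (rule edge_coord_sym)
  have "card Y \<le> m - 1"
    using card_sep_le_length[of "segment 0 (m - 1) w"] segment_w[of 0 "m - 1"] length_w_half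
    unfolding Y_def walk_betw_def by auto
  moreover have "m \<le> card (sep (w ! (m - 1)) (w ! (L - 1)))"
    using cyclic_dist_le_card_sep[of "m - 1" "L - 1"] length_w_half by auto
  moreover have "card (sep (w ! (m - 1)) (w ! (L - 1))) = (if l2 \<in> Y then card Y - 1 else Suc (card Y))"
    using card_sep_edge_right[OF nth_in_V e2] l2 nth_L sep_sym length_w_half unfolding Y_def by simp
  ultimately have "l2 \<notin> Y" using length_w_half by (auto split: if_splits)
  moreover have "l2 \<in> sep (w ! 0) (w ! m)"
  proof -
    have "Suc (m - 1) = m" using length_w_half by simp
    then have "edge_coord (segment m L w ! (m - 1)) (segment m L w ! m) \<in> sep (w ! m) (w ! L)"
      using geodesic_step[OF geodesic_halves(2), of "m - 1"] segment_w[of m L] length_w_half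
      unfolding walk_betw_def by auto
    then show ?thesis
      using nth_segment[of m L w] length_w_half nth_L sep_sym unfolding l2_def by (simp add: mult_2)
  qed
  moreover have "sep (w ! 0) (w ! m) = {k. (k \<in> Y) \<noteq> (k = l1)}"
    using sep_edge_right[OF e1] unfolding Y_def l1_def .
  ultimately show ?thesis unfolding l1_def l2_def by auto
qed

lemma exit_coord_in_sep_before_half:
  assumes z: "E (w ! 0) z" "z \<notin> set w"
    and crossed: "0 < count_steps (crosses (edge_coord (w ! 0) z)) w"
  shows "edge_coord (w ! 0) z \<in> sep (w ! 0) (w ! (m - 1))"
proof (rule ccontr)
  define k where "k = edge_coord (w ! 0) z"
  assume "edge_coord (w ! 0) z \<notin> sep (w ! 0) (w ! (m - 1))"
  then have not_in: "k \<notin> sep (w ! 0) (w ! (m - 1))" unfolding k_def .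
  have e1: "E (w ! (m - 1)) (w ! m)" and eL: "E (w ! L) (w ! (L - 1))"
    using walk_nth_edge[OF walk_w, of "m - 1"] walk_nth_edge[OF walk_w, of "L - 1"] length_w_half edge_sym
    by auto
  have "k \<in> sep (w ! 0) (w ! m)" using crossed_coord_in_sep_half crossed unfolding k_def .
  then have "k = edge_coord (w ! (m - 1)) (w ! m)" using sep_edge_right[OF e1] not_in by auto
  then have k: "k = edge_coord (w ! L) (w ! (L - 1))"
    using opposite_steps_same_coord edge_coord_sym by simp
  have "sep z (w ! (L - 1)) = {}"
    using mem_f_edge[OF z(1)] mem_f_edge[OF eL] nth_L k unfolding sep_def k_def by auto
  then have "z = w ! (L - 1)" using eq_if_sep_empty edge_in_V z(1) eL by blast
  moreover have "w ! (L - 1) \<in> set w" using length_w_half by simp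
  ultimately show False using z(2) by simp
qed

(* With geodesics G1 from z to w_(m-1) and G2 from w_(m+1) to z, the closed walks
   G1 w_(m-1) w_m w_(m+1) G2,  G1 w_(m-1) ... w_0 z  and  z w_0 ... w_(m+1) G2  are shorter than w,
   while their marked counts add up to that of w plus an even number. *)
lemma no_bypass_of_antipode:
  assumes z: "E (w ! 0) z"
    and short1: "card (sep z (w ! (m - 1))) \<le> m - 2"
    and short2: "card (sep z (w ! (m + 1))) \<le> m - 2"
  shows False
proof -
  have zV: "z \<in> V" using z edge_in_V by blast
  have le: "m - 1 \<le> L" "m + 1 \<le> L" using length_w_half by auto
  obtain G1 where G1: "walk_betw V E z G1 (w ! (m - 1))" "geodesic G1"
    using geodesic_exists[OF zV nth_in_V[OF le(1)]] by blast
  obtain G2 where G2: "walk_betw V E (w ! (m + 1)) G2 z" "geodesic G2"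
    using geodesic_exists[OF nth_in_V[OF le(2)] zV] by blast
  have ne: "G1 \<noteq> []" "G2 \<noteq> []" using G1(1) G2(1) walk_not_Nil unfolding walk_betw_def by auto
  have "length G1 \<le> m - 1" using G1 short1 ne(1) length_w_half unfolding geodesic_def walk_betw_def by auto
  have "length G2 \<le> m - 1"
    using G2 short2 ne(2) length_w_half sep_sym[of z] unfolding geodesic_def walk_betw_def by auto
  define S0 where "S0 = segment 0 (m - 1) w"
  define S1 where "S1 = segment (m - 1) (m + 1) w"
  define S2 where "S2 = segment (m + 1) L w"
  have S0: "walk_betw V E (w ! (m - 1)) (rev S0) (w ! 0)" "length (rev S0) = m"
    using walk_betw_rev[OF graph] segment_w[of 0 "m - 1"] length_w_half unfolding S0_def by auto
  have S1: "walk_betw V E (w ! (m - 1)) S1 (w ! (m + 1))" "length S1 = 3"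
    using segment_w[of "m - 1" "m + 1"] length_w_half unfolding S1_def by auto
  have S2: "walk_betw V E (w ! 0) (rev S2) (w ! (m + 1))" "length (rev S2) = m"
    using walk_betw_rev[OF graph] segment_w[of "m + 1" L] length_w_half nth_L unfolding S2_def by auto
  have e: "walk_betw V E (w ! 0) [w ! 0, z] z" "walk_betw V E z [z, w ! 0] (w ! 0)"
    using z zV nth_in_V[of 0] edge_sym unfolding walk_betw_def by auto
  have "even (count_steps P (G1 \<oplus> S1) + count_steps P G2)"
    using even_if_shorter_loop[OF walk_betw_glue[OF G1(1) S1(1)] G2(1)] \<open>length G1 \<le> m - 1\<close>
      \<open>length G2 \<le> m - 1\<close> length_glue_walk_betw[OF G1(1) S1(1)] S1(2) length_w_half by simp
  moreover have "even (count_steps P G1 + count_steps P (rev S0 \<oplus> [w ! 0, z]))"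
    using even_if_shorter_loop[OF G1(1) walk_betw_glue[OF S0(1) e(1)]] \<open>length G1 \<le> m - 1\<close>
      length_glue_walk_betw[OF S0(1) e(1)] S0(2) length_w_half by simp
  moreover have "even (count_steps P ([z, w ! 0] \<oplus> rev S2) + count_steps P G2)"
    using even_if_shorter_loop[OF walk_betw_glue[OF e(2) S2(1)] G2(1)] \<open>length G2 \<le> m - 1\<close>
      length_glue_walk_betw[OF e(2) S2(1)] S2(2) length_w_half by simp
  moreover have "count_steps P w = count_steps P S0 + count_steps P S1 + count_steps P S2"
    using count_steps_w[of "m - 1" "m + 1" P] length_w_half unfolding S0_def S1_def S2_def by simp
  moreover have "count_steps P [z, w ! 0] = count_steps P [w ! 0, z]" using P_sym[of z] by simp
  ultimately show False
    using odd_w count_steps_glue_walk_betw[OF G1(1) S1(1)] count_steps_glue_walk_betw[OF S0(1) e(1)]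
      count_steps_glue_walk_betw[OF e(2) S2(1)] count_steps_rev[of P, OF P_sym] by auto
qed

end

lemma start_neighbour_in_walk:
  assumes z: "E (w ! 0) z" and crossed: "0 < count_steps (crosses (edge_coord (w ! 0) z)) w"
  shows "z \<in> set w"
proof (rule ccontr)
  assume out: "z \<notin> set w"
  obtain m where m: "length w = Suc (2 * m)" "2 \<le> m" by (rule length_w_odd)
  interpret r: minimal_odd_walk V E n f P "rev w" by (rule minimal_odd_walk_rev)
  \<comment> \<open>the reversed walk yields the symmetric statement for \<open>w ! (m + 1)\<close>\<close>
  define k where "k = edge_coord (w ! 0) z"
  have r0: "rev w ! 0 = w ! 0" and r1: "rev w ! (m - 1) = w ! (m + 1)"
    using nth_L m by (simp_all add: rev_nth)
  have "count_steps (crosses k) (rev w) = count_steps (crosses k) w"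
    by (intro count_steps_rev) (simp add: edge_coord_sym)
  then have in2: "k \<in> sep (w ! 0) (w ! (m + 1))"
    using r.exit_coord_in_sep_before_half[of m] z out crossed r0 r1 m(1) unfolding k_def by simp
  have in1: "k \<in> sep (w ! 0) (w ! (m - 1))"
    using exit_coord_in_sep_before_half[OF m(1) z out crossed] unfolding k_def .
  have ez: "E z (w ! 0)" and k: "edge_coord z (w ! 0) = k"
    using z edge_sym edge_coord_sym unfolding k_def by auto
  have "card (sep (w ! 0) (w ! (m - 1))) \<le> m - 1"
    using card_sep_le_length segment_w[of 0 "m - 1"] m unfolding walk_betw_def by fastforce
  moreover have "card (sep (w ! (m + 1)) (w ! 0)) \<le> m - 1"
    using card_sep_le_length segment_w[of "m + 1" L] m nth_L unfolding walk_betw_def by fastforce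
  ultimately have "card (sep z (w ! (m - 1))) \<le> m - 2" "card (sep z (w ! (m + 1))) \<le> m - 2"
    using card_sep_edge_left[OF ez nth_in_V] in1 in2 k sep_sym m by auto
  then show False using no_bypass_of_antipode[OF m(1) z] by blast
qed

lemma neighbour_in_walk:
  assumes c: "c \<in> set w" and z: "E c z" and crossed: "0 < count_steps (crosses (edge_coord c z)) w"
  shows "z \<in> set w"
proof -
  obtain s where "s < length w" "w ! s = c" using c by (auto simp: in_set_conv_nth)
  then have s: "s \<le> L" "w ! s = c" by auto
  interpret r: minimal_odd_walk V E n f P "rotation s" by (rule minimal_odd_walk_rotation[OF s(1)])
  have "rotation s ! 0 = c"
    using rotation(1)[OF s(1)] s walk_not_Nil unfolding walk_betw_def by (metis hd_conv_nth)
  then have "z \<in> set (rotation s)" using r.start_neighbour_in_walk z crossed rotation(4)[OF s(1)] by simp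
  then show ?thesis using rotation(3)[OF s(1)] by simp
qed

end

lemma set_butlast_closed:
  assumes "hd w = last w" "1 < length w"
  shows "set (butlast w) = set w"
proof -
  have "w \<noteq> []" using assms by auto
  then have "set w = insert (last w) (set (butlast w))"
    using set_append[of "butlast w" "[last w]"] by simp
  moreover have "last w \<in> set (butlast w)"
    using assms by (cases w) (auto simp: butlast.simps)
  ultimately show ?thesis by auto
qed

lemma nth_butlast_closed_mod:
  assumes "hd w = last w" "i < length w - 1"
  shows "butlast w ! ((i + 1) mod (length w - 1)) = w ! Suc i"
proof (cases "Suc i < length w - 1")
  case True
  then show ?thesis by (simp add: nth_butlast)
next
  case False
  then have "Suc i = length w - 1" using assms(2) by simp
  moreover have "w \<noteq> []" using assms(2) by auto
  ultimately show ?thesis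
    using assms by (simp add: nth_butlast hd_conv_nth last_conv_nth)
qed

lemma closed_walk_steps_in_cycle_edges:
  assumes "hd w = last w" "i < length w - 1"
  shows "(w ! i, w ! Suc i) \<in> cycle_edges (butlast w)" "(w ! Suc i, w ! i) \<in> cycle_edges (butlast w)"
  using assms nth_butlast_closed_mod[OF assms] nth_butlast[of i w]
  unfolding cycle_edges_def by auto

context minimal_odd_walk
begin

lemma set_butlast_w: "set (butlast w) = set w"
  using even_length_ge_4 by (intro set_butlast_closed closed_w) linarith

lemma distinct_butlast_w: "distinct (butlast w)"
  unfolding distinct_conv_nth
proof (intro allI impI)
  fix i j assume ij: "i < length (butlast w)" "j < length (butlast w)" "i \<noteq> j"
  show "butlast w ! i \<noteq> butlast w ! j"
  proof
    assume eq: "butlast w ! i = butlast w ! j"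
    define a where "a = min i j"
    define b where "b = max i j"
    have ab: "a < b" "b < L" using ij unfolding a_def b_def by auto
    have "w ! i = w ! j" using eq ij nth_butlast[of i w] nth_butlast[of j w] by simp
    then have "w ! a = w ! b" unfolding a_def b_def by (simp add: min_def max_def)
    then show False using cyclic_dist_le_card_sep[of a b] ab by simp
  qed
qed

lemma is_cycle_butlast_w: "is_cycle V E (butlast w)"
  unfolding is_cycle_def
proof (intro conjI allI impI)
  show "3 \<le> length (butlast w)" using even_length_ge_4 by simp
  show "distinct (butlast w)" by (rule distinct_butlast_w)
  show "set (butlast w) \<subseteq> V" using set_butlast_w walk_w unfolding walk_def by simp
  fix i assume "i < length (butlast w)"
  then show "E (butlast w ! i) (butlast w ! ((i + 1) mod length (butlast w)))"
    using walk_nth_edge[OF walk_w, of i] nth_butlast_closed_mod[OF closed_w] nth_butlast[of i w] by simp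
qed

lemma edge_positions_adjacent:
  assumes "i < j" "j < L" "E (w ! i) (w ! j)"
  shows "j = Suc i \<or> (i = 0 \<and> j = L - 1)"
  using cyclic_dist_le_card_sep[of i j] sep_edge[OF assms(3)] assms by auto

lemma edge_in_cycle_edges:
  assumes "x \<in> set w" "y \<in> set w" "E x y"
  shows "(x, y) \<in> cycle_edges (butlast w)"
proof -
  have steps: "(w ! i, w ! j) \<in> cycle_edges (butlast w) \<and> (w ! j, w ! i) \<in> cycle_edges (butlast w)"
    if ij: "i < j" "j < L" "E (w ! i) (w ! j)" for i j
  proof -
    consider "j = Suc i" | "i = 0" "j = L - 1" using edge_positions_adjacent[OF ij] by blast
    then show ?thesis
    proof cases
      case 1
      then show ?thesis using closed_walk_steps_in_cycle_edges[OF closed_w] ij by simp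
    next
      case 2
      then have "Suc (L - 1) = L" using ij by simp
      then have "w ! i = w ! Suc (L - 1)" using 2 nth_L by simp
      then show ?thesis using closed_walk_steps_in_cycle_edges[OF closed_w, of "L - 1"] ij 2 by simp
    qed
  qed
  have "x \<in> set (butlast w)" "y \<in> set (butlast w)" using assms set_butlast_w by auto
  then obtain i j where ij: "i < L" "j < L" "w ! i = x" "w ! j = y"
    by (auto simp: in_set_conv_nth nth_butlast)
  then have "i \<noteq> j" using edge_neq assms(3) by auto
  then show ?thesis using steps[of i j] steps[of j i] ij assms(3) edge_sym by (cases "i < j") auto
qed

lemma convex_butlast_w: "convex_subgraph V E (set (butlast w)) (cycle_edges (butlast w))"
  unfolding convex_subgraph_def
proof (intro ballI allI impI)
  fix u v p
  assume u: "u \<in> set (butlast w)" and v: "v \<in> set (butlast w)"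
    and p: "walk_betw V E u p v \<and> length p = Suc (dist V E u v)"
  have g: "geodesic p" using p geodesic_if_shortest by blast
  have wp: "walk V E p" and ends: "hd p = u" "last p = v" using p unfolding walk_betw_def by auto
  have in_w: "p ! s \<in> set w" if "s < length p" for s
    using that
  proof (induction s)
    case 0
    then show ?case using u ends set_butlast_w by (simp add: hd_conv_nth[symmetric])
  next
    case (Suc s)
    have "edge_coord (p ! s) (p ! Suc s) \<in> sep u v" using geodesic_step[OF g Suc.prems] ends by simp
    then have "0 < count_steps (crosses (edge_coord (p ! s) (p ! Suc s))) w"
      using crosses_if_in_sep[OF walk_w] u v set_butlast_w by simp
    moreover have "p ! s \<in> set w" using Suc by simp
    ultimately show ?case using neighbour_in_walk walk_nth_edge[OF wp Suc.prems] by blast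
  qed
  have "set p \<subseteq> set (butlast w)"
  proof
    fix x assume "x \<in> set p"
    then obtain s where "s < length p" "p ! s = x" by (auto simp: in_set_conv_nth)
    then show "x \<in> set (butlast w)" using in_w set_butlast_w by blast
  qed
  moreover have "(p ! i, p ! Suc i) \<in> cycle_edges (butlast w)" if "Suc i < length p" for i
    using edge_in_cycle_edges in_w walk_nth_edge[OF wp] that by simp
  ultimately show "set p \<subseteq> set (butlast w) \<and> (\<forall>i. Suc i < length p \<longrightarrow> (p ! i, p ! Suc i) \<in> cycle_edges (butlast w))"
    by blast
qed

lemma convex_cycle_butlast_w: "convex_cycle V E (butlast w)"
  unfolding convex_cycle_def using is_cycle_butlast_w convex_butlast_w by simp

lemma crossing_in_cycle_edges:
  assumes "0 < count_steps (crosses k) w"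
  obtains x y where "(x, y) \<in> cycle_edges (butlast w)" "E x y" "edge_coord x y = k"
proof -
  obtain s where s: "Suc s < length w" "edge_coord (w ! s) (w ! Suc s) = k"
    using count_steps_pos_iff[THEN iffD1, OF assms] by blast
  show ?thesis
  proof (rule that)
    show "(w ! s, w ! Suc s) \<in> cycle_edges (butlast w)"
      using closed_walk_steps_in_cycle_edges(1)[OF closed_w] s(1) by simp
    show "E (w ! s) (w ! Suc s)" using walk_nth_edge[OF walk_w s(1)] .
  qed (rule s(2))
qed

end

lemma (in hypercube_embedding) minimal_odd_walk_exists:
  assumes P_sym: "\<And>x y. P x y = P y x" and W: "walk V E W" "hd W = last W" "odd (count_steps P W)"
  obtains w where "minimal_odd_walk V E n f P w"
proof -
  obtain w where w: "walk V E w \<and> hd w = last w \<and> odd (count_steps P w)"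
    and least: "\<forall>p. walk V E p \<and> hd p = last p \<and> odd (count_steps P p) \<longrightarrow> length w \<le> length p"
    using ex_has_least_nat[of "\<lambda>p. walk V E p \<and> hd p = last p \<and> odd (count_steps P p)" W length] W
    by blast
  have "minimal_odd_walk V E n f P w"
    by (intro minimal_odd_walk.intro minimal_odd_walk_axioms.intro hypercube_embedding_axioms)
      (use P_sym w least in auto)
  then show ?thesis by (rule that)
qed

section \<open>Harmonic-even partial cubes\<close>

locale harmonic_even_embedding = hypercube_embedding +
  assumes harmonic_even: "harmonic_even V E" and finite_V: "finite V"
begin

definition antipode :: "'a \<Rightarrow> 'a" where
  "antipode v = (THE w. w \<in> V \<and> dist V E v w = diam V E)"

lemma antipode_spec: "v \<in> V \<Longrightarrow> antipode v \<in> V \<and> card (sep v (antipode v)) = diam V E"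
proof -
  assume v: "v \<in> V"
  have "\<exists>!w. w \<in> V \<and> dist V E v w = diam V E" using harmonic_even v unfolding harmonic_even_def by blast
  then have "antipode v \<in> V \<and> dist V E v (antipode v) = diam V E"
    unfolding antipode_def by (rule theI')
  then show ?thesis using v dist_eq_card_sep[of v "antipode v"] by simp
qed

lemma edge_antipode: "E u v \<Longrightarrow> E (antipode u) (antipode v)"
  using harmonic_even unfolding harmonic_even_def antipode_def by blast

lemma card_sep_le_diam:
  assumes "u \<in> V" "v \<in> V"
  shows "card (sep u v) \<le> diam V E"
proof -
  have "finite ((\<lambda>(u, v). dist V E u v) ` (V \<times> V))" using finite_V by simp
  moreover have "{dist V E u v | u v. u \<in> V \<and> v \<in> V} = (\<lambda>(u, v). dist V E u v) ` (V \<times> V)" by auto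
  ultimately have "dist V E u v \<le> diam V E"
    unfolding diam_def using assms by (auto intro: Max_ge)
  then show ?thesis using assms dist_eq_card_sep by simp
qed

lemma edge_coord_antipode:
  assumes xy: "E x y"
  shows "edge_coord (antipode x) (antipode y) = edge_coord x y" "edge_coord x y \<in> sep x (antipode x)"
proof -
  define X where "X = sep x (antipode x)"
  define k where "k = edge_coord x y"
  define l where "l = edge_coord (antipode x) (antipode y)"
  have V: "x \<in> V" "y \<in> V" using xy edge_in_V by auto
  have x': "antipode x \<in> V" "card X = diam V E" and y': "antipode y \<in> V" "card (sep y (antipode y)) = diam V E"
    using antipode_spec V unfolding X_def by auto
  have e': "E (antipode x) (antipode y)" using edge_antipode[OF xy] .
  have "card (sep x (antipode y)) = (if l \<in> X then card X - 1 else Suc (card X))"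
    using card_sep_edge_right[OF V(1) e'] unfolding X_def l_def .
  then have l: "l \<in> X" using card_sep_le_diam[OF V(1) y'(1)] x'(2) by (auto split: if_splits)
  have "card (sep y (antipode x)) = (if k \<in> X then card X - 1 else Suc (card X))"
    using card_sep_edge_left[OF edge_sym[OF xy] x'(1)] edge_coord_sym unfolding X_def k_def by simp
  then have k: "k \<in> X" using card_sep_le_diam[OF V(2) x'(1)] x'(2) by (auto split: if_splits)
  have "k = l"
  proof (rule ccontr)
    assume "k \<noteq> l"
    have finX: "finite X" using finite_sep V x' unfolding X_def by simp
    have "sep y (antipode x) = {q. (q \<in> X) \<noteq> (q = k)}"
      using sep_edge_left[OF edge_sym[OF xy]] edge_coord_sym unfolding X_def k_def by simp
    then have "sep y (antipode y) = X - {k, l}"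
      using sep_edge_right[OF e', of y] k l \<open>k \<noteq> l\<close> unfolding l_def by auto
    then have "card (sep y (antipode y)) = card X - 2"
      using k l \<open>k \<noteq> l\<close> finX by (simp add: card_Diff_subset)
    moreover have "2 \<le> card X"
      using k l \<open>k \<noteq> l\<close> finX card_mono[of X "{k, l}"] by simp
    ultimately show False using y'(2) x'(2) by simp
  qed
  then show "edge_coord (antipode x) (antipode y) = edge_coord x y" "edge_coord x y \<in> sep x (antipode x)"
    using k unfolding k_def l_def X_def by auto
qed

lemma sep_antipode_edge: "E x y \<Longrightarrow> sep y (antipode y) = sep x (antipode x)"
  using mem_f_edge[of x y] mem_f_edge[OF edge_antipode, of x y] edge_coord_antipode(1)[of x y]
  unfolding sep_def by auto

lemma sep_antipode_eq:
  assumes "u \<in> V" "v \<in> V"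
  shows "sep u (antipode u) = sep v (antipode v)"
proof -
  have "sep (last p) (antipode (last p)) = sep (hd p) (antipode (hd p))" if "walk V E p" for p
    using that
  proof (induction p rule: induct_list012)
    case (3 x y r)
    then show ?case using sep_antipode_edge[of x y] by simp
  qed simp_all
  moreover obtain p where "walk_betw V E u p v"
    using connected assms unfolding connected_graph_def by blast
  ultimately show ?thesis unfolding walk_betw_def by metis
qed

lemma edge_coord_in_sep_antipode: "E x y \<Longrightarrow> v \<in> V \<Longrightarrow> edge_coord x y \<in> sep v (antipode v)"
  using edge_coord_antipode(2) sep_antipode_eq edge_in_V by blast

lemma odd_closed_walk_exists:
  assumes ab: "E a b" and cd: "E c d" and ij: "edge_coord a b \<noteq> edge_coord c d"
  obtains W where "walk V E W" "hd W = last W"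
    "odd (count_steps (crosses_on_side (edge_coord c d) (edge_coord a b) (edge_coord a b \<in> f b)) W)"
proof -
  define i where "i = edge_coord a b"
  define j where "j = edge_coord c d"
  define g where "g = (i \<in> f b)"
  define P where "P = crosses_on_side j i g"
  have V: "a \<in> V" "b \<in> V" "antipode a \<in> V" "antipode b \<in> V" using ab edge_in_V antipode_spec by auto
  define X where "X = sep a (antipode a)"
  have X: "i \<in> X" "j \<in> X" "sep b (antipode b) = X"
    using edge_coord_in_sep_antipode[OF ab V(1)] edge_coord_in_sep_antipode[OF cd V(1)]
      sep_antipode_edge[OF ab] unfolding X_def i_def j_def by auto
  have f_anti: "\<And>q. q \<in> f (antipode a) \<longleftrightarrow> (q \<in> f a) \<noteq> (q \<in> X)"
    "\<And>q. q \<in> f (antipode b) \<longleftrightarrow> (q \<in> f b) \<noteq> (q \<in> X)"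
    using sep_iff X(3) unfolding X_def by blast+
  have f_b: "\<And>q. q \<in> f b \<longleftrightarrow> (q \<in> f a) \<noteq> (q = i)" using mem_f_edge[OF ab] unfolding i_def by blast
  obtain G1 where G1: "walk_betw V E b G1 (antipode a)" "geodesic G1" using geodesic_exists V by blast
  obtain G2 where G2: "walk_betw V E (antipode a) G2 (antipode b)" "geodesic G2" using geodesic_exists V by blast
  obtain G3 where G3: "walk_betw V E (antipode b) G3 a" "geodesic G3" using geodesic_exists V by blast
  obtain G4 where G4: "walk_betw V E a G4 b" "geodesic G4" using geodesic_exists V by blast
  have "i \<notin> sep b (antipode a)" "j \<in> sep b (antipode a)"
    using sep_iff f_anti f_b X ij unfolding i_def j_def by auto
  then have "count_steps P G1 = 1"
    using count_crosses_on_side_geodesic(1)[OF G1] unfolding P_def g_def by simp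
  moreover have "i \<notin> sep (antipode b) a" "(i \<in> f (antipode b)) \<noteq> g"
    using sep_iff f_anti f_b X unfolding g_def by auto
  then have "count_steps P G3 = 0"
    using count_crosses_on_side_geodesic(1)[OF G3] unfolding P_def by simp
  moreover have "j \<notin> sep (antipode a) (antipode b)" "j \<notin> sep a b"
    using sep_iff f_anti f_b ij unfolding i_def j_def by auto
  then have "count_steps P G2 = 0" "count_steps P G4 = 0"
    using count_crosses_on_side_geodesic(2)[OF G2] count_crosses_on_side_geodesic(2)[OF G4]
    unfolding P_def by simp_all
  moreover have W12: "walk_betw V E b (G1 \<oplus> G2) (antipode b)" using walk_betw_glue[OF G1(1) G2(1)] .
  moreover have W123: "walk_betw V E b (G1 \<oplus> G2 \<oplus> G3) a" using walk_betw_glue[OF W12 G3(1)] .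
  moreover have "walk_betw V E b (G1 \<oplus> G2 \<oplus> G3 \<oplus> G4) b" using walk_betw_glue[OF W123 G4(1)] .
  moreover have "count_steps P (G1 \<oplus> G2 \<oplus> G3 \<oplus> G4)
      = count_steps P G1 + count_steps P G2 + count_steps P G3 + count_steps P G4"
    using count_steps_glue_walk_betw[OF G1(1) G2(1)] count_steps_glue_walk_betw[OF W12 G3(1)]
      count_steps_glue_walk_betw[OF W123 G4(1)] by simp
  ultimately show ?thesis using that unfolding walk_betw_def P_def i_def j_def g_def by auto
qed

end

theorem lemma2:
  fixes V :: "'a set" and E :: "'a \<Rightarrow> 'a \<Rightarrow> bool" and a b c d :: 'a
  assumes "finite V"
    and "partial_cube V E"
    and "harmonic_even V E"
    and "E a b" and "E c d"
    and "\<not> Theta V E (a, b) (c, d)"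
  shows "\<exists>cs. convex_cycle V E cs \<and>
           (\<exists>e \<in> cycle_edges cs. Theta V E (a, b) e) \<and>
           (\<exists>e \<in> cycle_edges cs. Theta V E (c, d) e)"
proof -
  obtain n f where "hypercube_embedding V E n f" using partial_cube_embedding[OF assms(2)] .
  then interpret harmonic_even_embedding V E n f
    by (intro harmonic_even_embedding.intro harmonic_even_embedding_axioms.intro) (use assms in auto)
  define i where "i = edge_coord a b"
  define j where "j = edge_coord c d"
  define P where "P = crosses_on_side j i (i \<in> f b)"
  have "i \<noteq> j" using Theta_if_edge_coord_eq assms(4-6) unfolding i_def j_def by blast
  then obtain W where "walk V E W" "hd W = last W" "odd (count_steps P W)"
    using odd_closed_walk_exists[OF assms(4,5)] unfolding P_def i_def j_def by blast
  then obtain w where "minimal_odd_walk V E n f P w"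
    using minimal_odd_walk_exists[of P] crosses_on_side_sym unfolding P_def by blast
  then interpret minimal_odd_walk V E n f P w .
  have "0 < count_steps (crosses i) w" "0 < count_steps (crosses j) w"
    using closed_walk_odd_crosses_on_side walk_w closed_w odd_w unfolding P_def by blast+
  then obtain x y x' y' where
    "(x, y) \<in> cycle_edges (butlast w)" "E x y" "edge_coord x y = i"
    "(x', y') \<in> cycle_edges (butlast w)" "E x' y'" "edge_coord x' y' = j"
    by (metis crossing_in_cycle_edges)
  then show ?thesis
    using convex_cycle_butlast_w Theta_if_edge_coord_eq assms(4,5) unfolding i_def j_def by metis
qed

end
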